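(* Let $Z$ be a real Banach space and $f:Z\to\mathbb{R}$ a continuous convex function. Then there exists a unique closed linear subspace $Y_f$ of $Z$ such that, for the quotient space $X_f:=Z/Y_f$ and the natural projection $\pi:Z\to X_f$, the function $f$ can be written as $$f(z)=c(\pi(z))+\ell(z)\quad\text{for all } z\in Z,$$ where $\ell\in Z^*$ and $c:X_f\to[a,\infty)$ is a convex function which is not constant on any line (i.e. there are no $\hat x,\hat v\in X_f$ with $\hat v\neq 0$ and $t\mapsto c(\hat x+t\hat v)$ constant on $\mathbb{R}$), with $a\in c(X_f)$. Moreover, $$Y_f=\{v\in Z: f(z_0+tv)-f(z_0)-\langle \xi_0,tv\rangle=0 \text{ for all } t\in\mathbb{R}\},$$ where $z_0$ is any point of $Z$ and $\xi_0$ is any element of $\partial f(z_0)$.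
   Context: For a continuous convex $f$ on a Banach space $Z$ with dual $Z^*$ and duality pairing $\langle\cdot,\cdot\rangle$, $\partial f(x)=\{\xi\in Z^*: f(y)\ge f(x)+\langle\xi,y-x\rangle \text{ for all } y\in Z\}$ (nonempty for every $x$). $Z/Y_f$ carries the quotient norm. *)

theory Defs
  imports "HOL-Analysis.Analysis"
begin

definition dual_space :: "('z::real_normed_vector \<Rightarrow> real) set" where
  "dual_space = {\<xi>. bounded_linear \<xi>}"

definition subdiff :: "('z::real_normed_vector \<Rightarrow> real) \<Rightarrow> 'z \<Rightarrow> ('z \<Rightarrow> real) set" where
  "subdiff f x = {\<xi> \<in> dual_space. \<forall>y. f y \<ge> f x + \<xi> (y - x)}"

text \<open>Quotient space Z/Y realised as the set of cosets z + Y, with the natural projection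
  and the induced vector operations.\<close>
definition quot_proj :: "'z::real_vector set \<Rightarrow> 'z \<Rightarrow> 'z set" where
  "quot_proj Y z = (\<lambda>y. z + y) ` Y"

definition quot_space :: "'z::real_vector set \<Rightarrow> 'z set set" where
  "quot_space Y = range (quot_proj Y)"

definition quot_add :: "'z::real_vector set \<Rightarrow> 'z set \<Rightarrow> 'z set \<Rightarrow> 'z set" where
  "quot_add Y A B = quot_proj Y ((SOME a. a \<in> A) + (SOME b. b \<in> B))"

definition quot_scale :: "'z::real_vector set \<Rightarrow> real \<Rightarrow> 'z set \<Rightarrow> 'z set" where
  "quot_scale Y t A = quot_proj Y (t *\<^sub>R (SOME a. a \<in> A))"

definition quot_zero :: "'z::real_vector set \<Rightarrow> 'z set" where
  "quot_zero Y = quot_proj Y 0"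

definition quot_convex_on :: "'z::real_vector set \<Rightarrow> ('z set \<Rightarrow> real) \<Rightarrow> bool" where
  "quot_convex_on Y c \<longleftrightarrow>
     (\<forall>A\<in>quot_space Y. \<forall>B\<in>quot_space Y. \<forall>u::real. 0 \<le> u \<and> u \<le> 1 \<longrightarrow>
        c (quot_add Y (quot_scale Y u A) (quot_scale Y (1 - u) B)) \<le> u * c A + (1 - u) * c B)"

definition quot_const_on_some_line :: "'z::real_vector set \<Rightarrow> ('z set \<Rightarrow> real) \<Rightarrow> bool" where
  "quot_const_on_some_line Y c \<longleftrightarrow>
     (\<exists>X\<in>quot_space Y. \<exists>V\<in>quot_space Y. V \<noteq> quot_zero Y \<and>
        (\<exists>k. \<forall>t::real. c (quot_add Y X (quot_scale Y t V)) = k))"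

definition decomposes :: "('z::real_normed_vector \<Rightarrow> real) \<Rightarrow> 'z set \<Rightarrow> bool" where
  "decomposes f Y \<longleftrightarrow>
     (\<exists>c l a. l \<in> dual_space \<and>
        quot_convex_on Y c \<and> \<not> quot_const_on_some_line Y c \<and>
        (\<forall>X\<in>quot_space Y. c X \<ge> a) \<and> a \<in> c ` quot_space Y \<and>
        (\<forall>z. f z = c (quot_proj Y z) + l z))"

end

theory Submission
  imports Defs
begin

text \<open>A continuous convex function has a subgradient \<xi> at 0: a convex function vanishing at 0
  has a linear minorant (Hahn-Banach by Zorn's lemma), which continuity makes bounded. Then
  h = f - \<xi> is convex and minimal at 0. A convex function bounded above on a line is constant
  on it, so the directions v with h constant on \<real>v form a closed subspace Y, h is invariant
  under translation by Y, and h is constant on no line whose direction lies outside Y. Hence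
  h descends to a convex function on Z/Y that is bounded below, attains its infimum and is
  constant on no line. Conversely, for any such decomposition f = c \<circ> \<pi> + l and any
  \<xi>0 \<in> \<partial>f(z0), the defect f(z0 + tv) - f(z0) - \<xi>0(tv) is nonnegative, and it vanishes
  identically iff c is affine, hence (being bounded below) constant, along \<pi>(z0 + \<real>v),
  i.e. iff v \<in> Y. This characterisation also gives uniqueness.\<close>

section \<open>Linear minorants of convex functions\<close>

text \<open>When g 0 = 0, a maximal dominated subspace of \<open>'a \<times> real\<close> is the graph of a linear
  minorant of g.\<close>

definition dominated_subspace :: "('a::real_vector \<Rightarrow> real) \<Rightarrow> ('a \<times> real) set \<Rightarrow> bool" where
  "dominated_subspace g G \<longleftrightarrow> subspace G \<and> (\<forall>x a. (x, a) \<in> G \<longrightarrow> a \<le> g x)"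

lemma dominated_subspace_slope_le:
  fixes g :: "'a::real_vector \<Rightarrow> real"
  assumes cv: "convex_on UNIV g" and G: "dominated_subspace g G"
    and yb: "(y, b) \<in> G" and zc: "(z, c) \<in> G" and s: "s > 0" and t: "t > 0"
  shows "(b - g (y - s *\<^sub>R w)) / s \<le> (g (z + t *\<^sub>R w) - c) / t"
proof -
  define u where "u = s / (s + t)"
  have u: "0 \<le> u" "u \<le> 1" using s t by (auto simp: u_def)
  have sub: "subspace G" using G by (simp add: dominated_subspace_def)
  have "(1 - u) *\<^sub>R (y, b) + u *\<^sub>R (z, c) \<in> G"
    by (intro subspace_add[OF sub] subspace_scale[OF sub] yb zc)
  then have "(1 - u) * b + u * c \<le> g ((1 - u) *\<^sub>R y + u *\<^sub>R z)"
    using G by (simp add: dominated_subspace_def)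
  also have "(1 - u) *\<^sub>R y + u *\<^sub>R z = (1 - u) *\<^sub>R (y - s *\<^sub>R w) + u *\<^sub>R (z + t *\<^sub>R w)"
  proof -
    have "u * s + u * t = s" unfolding distrib_left[symmetric] u_def using s t by simp
    then show ?thesis by (simp add: algebra_simps) (metis scaleR_add_left)
  qed
  also have "g \<dots> \<le> (1 - u) * g (y - s *\<^sub>R w) + u * g (z + t *\<^sub>R w)"
    using convex_onD[OF cv u] by simp
  finally have "(1 - u) * b + u * c \<le> (1 - u) * g (y - s *\<^sub>R w) + u * g (z + t *\<^sub>R w)" .
  moreover have "1 - u = t / (s + t)" using s t by (simp add: u_def field_simps)
  ultimately have "(t * b + s * c) / (s + t) \<le> (t * g (y - s *\<^sub>R w) + s * g (z + t *\<^sub>R w)) / (s + t)"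
    by (simp add: u_def add_divide_distrib)
  then have "t * b + s * c \<le> t * g (y - s *\<^sub>R w) + s * g (z + t *\<^sub>R w)"
    using s t by (simp add: divide_le_cancel)
  then have "t * (b - g (y - s *\<^sub>R w)) \<le> s * (g (z + t *\<^sub>R w) - c)"
    by (simp add: algebra_simps)
  then show ?thesis
    using s t by (simp add: field_simps mult.commute)
qed

lemma dominated_subspace_slope_exists:
  fixes g :: "'a::real_vector \<Rightarrow> real"
  assumes cv: "convex_on UNIV g" and G: "dominated_subspace g G"
  obtains \<alpha> where "\<And>x a t. (x, a) \<in> G \<Longrightarrow> a + t * \<alpha> \<le> g (x + t *\<^sub>R w)"
proof -
  have G0: "(0, 0) \<in> G"
    using G subspace_0 by (fastforce simp: dominated_subspace_def zero_prod_def)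
  txt \<open>Every left difference quotient of g along w lies below every right one, and any
    \<alpha> in between will do; take the supremum of the left ones.\<close>
  define S where "S = {(b - g (y - s *\<^sub>R w)) / s | y b s. (y, b) \<in> G \<and> s > 0}"
  have S_le: "q \<le> (g (z + t *\<^sub>R w) - c) / t" if "q \<in> S" "(z, c) \<in> G" "t > 0" for q z c t
  proof -
    obtain y b s where "q = (b - g (y - s *\<^sub>R w)) / s" "(y, b) \<in> G" "s > 0"
      using \<open>q \<in> S\<close> unfolding S_def by blast
    then show ?thesis using dominated_subspace_slope_le[OF cv G _ that(2) _ that(3)] by blast
  qed
  have "(0 - g (0 - 1 *\<^sub>R w)) / 1 \<in> S"
    unfolding S_def mem_Collect_eq using G0
    by (rule_tac exI[of _ 0], rule_tac exI[of _ 0], rule_tac exI[of _ 1]) simp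
  then have S_ne: "S \<noteq> {}" by blast
  have S_bdd: "bdd_above S"
    using S_le[OF _ G0, of _ 1] by (intro bdd_aboveI[of S "g w"]) simp
  have "a + t * Sup S \<le> g (x + t *\<^sub>R w)" if xa: "(x, a) \<in> G" for x a t
  proof (cases t "0::real" rule: linorder_cases)
    case less
    have "(a - g (x - (- t) *\<^sub>R w)) / (- t) \<in> S"
      unfolding S_def mem_Collect_eq using xa less
      by (rule_tac exI[of _ x], rule_tac exI[of _ a], rule_tac exI[of _ "- t"]) simp
    then have "(a - g (x + t *\<^sub>R w)) / (- t) \<le> Sup S"
      using cSup_upper[OF _ S_bdd] by simp
    then show ?thesis using less by (simp add: field_simps)
  next
    case equal
    then show ?thesis using G xa by (simp add: dominated_subspace_def)
  next
    case greater
    have "Sup S \<le> (g (x + t *\<^sub>R w) - a) / t"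
      using cSup_least[OF S_ne] S_le[OF _ xa greater] by blast
    then show ?thesis using greater by (simp add: field_simps)
  qed
  then show ?thesis using that by blast
qed

lemma dominated_subspace_extend:
  fixes g :: "'a::real_vector \<Rightarrow> real"
  assumes cv: "convex_on UNIV g" and G: "dominated_subspace g G"
  obtains G' a where "dominated_subspace g G'" "G \<subseteq> G'" "(w, a) \<in> G'"
proof -
  obtain \<alpha> where \<alpha>: "\<And>x a t. (x, a) \<in> G \<Longrightarrow> a + t * \<alpha> \<le> g (x + t *\<^sub>R w)"
    using dominated_subspace_slope_exists[OF cv G] by blast
  have sub: "subspace G" using G by (simp add: dominated_subspace_def)
  define G' where "G' = {p + q |p q. p \<in> G \<and> q \<in> span {(w, \<alpha>)}}"
  have "dominated_subspace g G'"
    unfolding dominated_subspace_def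
  proof (intro conjI allI impI)
    show "subspace G'"
      unfolding G'_def by (intro subspace_sums sub subspace_span)
    fix x a assume "(x, a) \<in> G'"
    then obtain y b t where "(y, b) \<in> G" "x = y + t *\<^sub>R w" "a = b + t * \<alpha>"
      by (auto simp: G'_def span_singleton)
    then show "a \<le> g x" using \<alpha> by simp
  qed
  moreover have "G \<subseteq> G'"
  proof
    fix p assume "p \<in> G"
    then show "p \<in> G'"
      unfolding G'_def using span_zero by (intro CollectI exI[of _ p] exI[of _ 0]) simp
  qed
  moreover have "(w, \<alpha>) \<in> G'"
    unfolding G'_def using subspace_0[OF sub] span_base[of "(w, \<alpha>)"]
    by (intro CollectI exI[of _ 0] exI[of _ "(w, \<alpha>)"]) simp
  ultimately show ?thesis using that by blast
qed

lemma dominated_subspace_Union_chain: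
  assumes "C \<noteq> {}" and "subset.chain {G. dominated_subspace g G} C"
  shows "dominated_subspace g (\<Union>C)"
proof -
  have sub: "subspace G" and below: "\<And>x a. (x, a) \<in> G \<Longrightarrow> a \<le> g x" if "G \<in> C" for G
    using assms(2) that by (auto simp: subset_chain_def dominated_subspace_def)
  have "subspace (\<Union>C)"
    unfolding subspace_def
  proof (intro conjI ballI allI)
    show "0 \<in> \<Union>C" using assms(1) sub subspace_0 by blast
    show "c *\<^sub>R p \<in> \<Union>C" if "p \<in> \<Union>C" for c p
      using that sub subspace_scale by blast
    fix p q assume "p \<in> \<Union>C" "q \<in> \<Union>C"
    then obtain G H where G: "G \<in> C" "p \<in> G" and H: "H \<in> C" "q \<in> H" by blast
    have "G \<subseteq> H \<or> H \<subseteq> G"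
      using assms(2) G H by (auto simp: subset_chain_def)
    then show "p + q \<in> \<Union>C"
      using G H by (meson UnionI sub subspace_add subsetD)
  qed
  then show ?thesis using below by (auto simp: dominated_subspace_def)
qed

lemma convex_on_linear_minorant:
  fixes g :: "'a::real_vector \<Rightarrow> real"
  assumes cv: "convex_on UNIV g" and g0: "g 0 = 0"
  obtains l where "linear l" "\<And>x. l x \<le> g x"
proof -
  have "\<exists>M\<in>{G. dominated_subspace g G}. \<forall>G\<in>{G. dominated_subspace g G}. M \<subseteq> G \<longrightarrow> G = M"
  proof (rule subset_Zorn_nonempty)
    show "{G. dominated_subspace g G} \<noteq> {}"
      using g0 subspace_single_0[where 'a="'a \<times> real"]
      by (auto simp: dominated_subspace_def zero_prod_def intro!: exI[of _ "{0}"])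
  qed (use dominated_subspace_Union_chain in blast)
  then obtain M where M: "dominated_subspace g M"
    and M_max: "\<And>G. dominated_subspace g G \<Longrightarrow> M \<subseteq> G \<Longrightarrow> G = M" by blast
  have sub: "subspace M" and below: "\<And>x a. (x, a) \<in> M \<Longrightarrow> a \<le> g x"
    using M by (auto simp: dominated_subspace_def)
  have total: "\<exists>a. (x, a) \<in> M" for x
    using dominated_subspace_extend[OF cv M, of x] M_max by metis
  have graph: "a = b" if "(x, a) \<in> M" "(x, b) \<in> M" for x a b
  proof -
    have "(x, a) - (x, b) \<in> M" "(x, b) - (x, a) \<in> M"
      using subspace_diff[OF sub] that by blast+
    then show ?thesis using below[of 0 "a - b"] below[of 0 "b - a"] g0 by simp
  qed
  define l where "l x = (SOME a. (x, a) \<in> M)" for x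
  have l: "(x, l x) \<in> M" for x
    unfolding l_def using total by (rule someI_ex)
  have "linear l"
  proof
    show "l (x + y) = l x + l y" for x y
      using graph[OF l] subspace_add[OF sub l l] by simp
    show "l (c *\<^sub>R x) = c *\<^sub>R l x" for c x
      using graph[OF l] subspace_scale[OF sub l] by simp
  qed
  then show ?thesis using that below[OF l] by blast
qed

section \<open>Convex functions along lines\<close>

lemma convex_on_affine_comp:
  fixes h :: "'b::real_vector \<Rightarrow> real" and A :: "'a::real_vector \<Rightarrow> 'b"
  assumes cv: "convex_on UNIV h" and A: "linear A"
  shows "convex_on UNIV (\<lambda>x. h (b + A x))"
proof
  fix t :: real and x y :: 'a assume t: "0 < t" "t < 1"
  have "b + A ((1 - t) *\<^sub>R x + t *\<^sub>R y) = (1 - t) *\<^sub>R (b + A x) + t *\<^sub>R (b + A y)"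
    by (simp add: linear_add[OF A] linear_scale[OF A]) (simp add: algebra_simps)
  then show "h (b + A ((1 - t) *\<^sub>R x + t *\<^sub>R y)) \<le> (1 - t) * h (b + A x) + t * h (b + A y)"
    using convex_onD[OF cv, of t] t by simp
qed simp

lemma convex_on_diff_linear:
  fixes f l :: "'a::real_vector \<Rightarrow> real"
  assumes cv: "convex_on UNIV f" and l: "linear l"
  shows "convex_on UNIV (\<lambda>x. f x - l x)"
proof
  fix t :: real and x y :: 'a assume t: "0 < t" "t < 1"
  have "l ((1 - t) *\<^sub>R x + t *\<^sub>R y) = (1 - t) * l x + t * l y"
    by (simp add: linear_add[OF l] linear_scale[OF l])
  then show "f ((1 - t) *\<^sub>R x + t *\<^sub>R y) - l ((1 - t) *\<^sub>R x + t *\<^sub>R y)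
      \<le> (1 - t) * (f x - l x) + t * (f y - l y)"
    using convex_onD[OF cv, of t] t by (simp add: algebra_simps)
qed simp

lemma convex_on_midpoint_le:
  fixes h :: "'a::real_vector \<Rightarrow> real"
  assumes "convex_on UNIV h"
  shows "h ((1 / 2) *\<^sub>R x + (1 / 2) *\<^sub>R y) \<le> (h x + h y) / 2"
  using convex_onD[OF assms, of "1 / 2" x y] by simp

lemma convex_on_real_bounded_above_imp_le:
  fixes \<phi> :: "real \<Rightarrow> real"
  assumes cv: "convex_on UNIV \<phi>" and bnd: "\<And>t. \<phi> t \<le> M"
  shows "\<phi> b \<le> \<phi> a"
proof (rule ccontr)
  assume "\<not> \<phi> b \<le> \<phi> a"
  define D where "D = \<phi> b - \<phi> a"
  have D: "D > 0" using \<open>\<not> \<phi> b \<le> \<phi> a\<close> by (simp add: D_def)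
  define s where "s = max 1 ((M - \<phi> a) / D + 1)"
  have s: "1 \<le> s" "(M - \<phi> a) / D + 1 \<le> s" by (simp_all add: s_def)
  txt \<open>Beyond b the chord from a forces \<open>\<phi> c \<ge> \<phi> a + s * D\<close>, which exceeds M.\<close>
  define c where "c = a + s * (b - a)"
  have "b = (1 - 1 / s) * a + 1 / s * c"
    using s by (simp add: c_def field_simps)
  then have "\<phi> b \<le> (1 - 1 / s) * \<phi> a + 1 / s * \<phi> c"
    using convex_onD[OF cv, of "1 / s" a c] s by simp
  then have "s * \<phi> b \<le> s * ((1 - 1 / s) * \<phi> a + 1 / s * \<phi> c)"
    using s by simp
  also have "\<dots> = (s - 1) * \<phi> a + \<phi> c"
    using s by (simp add: algebra_simps)
  finally have "\<phi> a + s * D \<le> \<phi> c"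
    by (simp add: D_def algebra_simps)
  moreover have "((M - \<phi> a) / D + 1) * D \<le> s * D"
    using s(2) D by (intro mult_right_mono) simp_all
  then have "M - \<phi> a + D \<le> s * D"
    using D by (simp add: distrib_right)
  ultimately show False
    using bnd[of c] D by linarith
qed

lemma convex_on_line_bounded_above_imp_const:
  fixes h :: "'a::real_vector \<Rightarrow> real"
  assumes cv: "convex_on UNIV h" and bnd: "\<And>t. h (x + t *\<^sub>R v) \<le> M"
  shows "h (x + t *\<^sub>R v) = h x"
proof -
  have "convex_on UNIV (\<lambda>t. h (x + t *\<^sub>R v))"
    by (rule convex_on_affine_comp[OF cv linear_scale_left])
  from convex_on_real_bounded_above_imp_le[OF this bnd, of t 0]
    convex_on_real_bounded_above_imp_le[OF this bnd, of 0 t]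
  show ?thesis by simp
qed

section \<open>Existence of subgradients\<close>

lemma linear_bounded_above_on_ball_imp_bounded_linear:
  fixes l :: "'a::real_normed_vector \<Rightarrow> real"
  assumes lin: "linear l" and \<delta>: "\<delta> > 0" and bnd: "\<And>v. norm v \<le> \<delta> \<Longrightarrow> l v \<le> B"
  shows "bounded_linear l"
proof -
  have le: "l x \<le> B / \<delta> * norm x" for x
  proof (cases "x = 0")
    case True
    then show ?thesis using linear_0[OF lin] by simp
  next
    case False
    have "l ((\<delta> / norm x) *\<^sub>R x) \<le> B" by (rule bnd) (use \<delta> in simp)
    then have "\<delta> * l x / norm x \<le> B" by (simp add: linear_scale[OF lin])
    then have "\<delta> * l x \<le> B * norm x" using False by (simp add: pos_divide_le_eq)
    then show ?thesis using \<delta> by (simp add: pos_le_divide_eq mult.commute)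
  qed
  show ?thesis
  proof (rule bounded_linear_intro[where K = "B / \<delta>"])
    show "norm (l x) \<le> norm x * (B / \<delta>)" for x
      using le[of x] le[of "- x"] linear_neg[OF lin, of x] by (simp add: abs_le_iff mult.commute)
  qed (simp_all add: linear_add[OF lin] linear_scale[OF lin])
qed

lemma subdiff_nonempty:
  fixes f :: "'a::real_normed_vector \<Rightarrow> real"
  assumes cv: "convex_on UNIV f" and cont: "continuous (at x0) f"
  shows "subdiff f x0 \<noteq> {}"
proof -
  define g where "g v = f (x0 + v) - f x0" for v
  have "convex_on UNIV (\<lambda>v. f (x0 + id v))"
    using convex_on_affine_comp[OF cv linear_id] .
  then have "convex_on UNIV g"
    unfolding g_def id_def by (rule convex_on_diff) (simp add: concave_on_const)
  moreover have "g 0 = 0" by (simp add: g_def)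
  ultimately obtain l where lin: "linear l" and lg: "\<And>v. l v \<le> g v"
    by (rule convex_on_linear_minorant) blast
  obtain d where d: "d > 0" and near: "\<And>x. dist x x0 < d \<Longrightarrow> dist (f x) (f x0) < 1"
    using cont unfolding continuous_at_eps_delta by (meson zero_less_one)
  have "l v \<le> 1" if "norm v \<le> d / 2" for v
    using lg[of v] near[of "x0 + v"] that d by (simp add: g_def dist_norm)
  with d have "bounded_linear l"
    by (intro linear_bounded_above_on_ball_imp_bounded_linear[OF lin, of "d / 2" 1]) auto
  moreover have "f x0 + l (y - x0) \<le> f y" for y
    using lg[of "y - x0"] by (simp add: g_def)
  ultimately have "l \<in> subdiff f x0"
    by (simp add: subdiff_def dual_space_def)
  then show ?thesis by blast
qed

context
  fixes Y :: "'a::real_vector set"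
  assumes Y: "subspace Y"
begin

lemma quot_proj_self: "z \<in> quot_proj Y z"
  unfolding quot_proj_def using subspace_0[OF Y] by force

lemma quot_proj_add: "y \<in> Y \<Longrightarrow> quot_proj Y (z + y) = quot_proj Y z"
  unfolding quot_proj_def
proof (intro set_eqI iffI)
  fix w assume y: "y \<in> Y"
  show "w \<in> (+) z ` Y" if "w \<in> (+) (z + y) ` Y"
    using that subspace_add[OF Y y] by (auto simp: add.assoc)
  show "w \<in> (+) (z + y) ` Y" if w: "w \<in> (+) z ` Y"
  proof -
    obtain u where "u \<in> Y" "w = z + u" using w by blast
    then show ?thesis
      using subspace_diff[OF Y \<open>u \<in> Y\<close> y] by (intro image_eqI[of _ _ "u - y"]) auto
  qed
qed

lemma quot_proj_some: "\<exists>y\<in>Y. (SOME x. x \<in> quot_proj Y z) = z + y"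
  using someI[of "\<lambda>x. x \<in> quot_proj Y z", OF quot_proj_self] by (auto simp: quot_proj_def)

lemma quot_scale_proj: "quot_scale Y t (quot_proj Y z) = quot_proj Y (t *\<^sub>R z)"
proof -
  obtain y where "y \<in> Y" "(SOME x. x \<in> quot_proj Y z) = z + y"
    using quot_proj_some by blast
  then show ?thesis
    unfolding quot_scale_def
    by (simp add: scaleR_add_right quot_proj_add subspace_scale[OF Y])
qed

lemma quot_add_proj: "quot_add Y (quot_proj Y p) (quot_proj Y q) = quot_proj Y (p + q)"
proof -
  obtain y y' where "y \<in> Y" "(SOME x. x \<in> quot_proj Y p) = p + y"
    and "y' \<in> Y" "(SOME x. x \<in> quot_proj Y q) = q + y'"
    using quot_proj_some by metis
  then show ?thesis
    unfolding quot_add_def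
    using quot_proj_add[OF subspace_add[OF Y, of y y'], of "p + q"] by (simp add: algebra_simps)
qed

lemma quot_proj_eq_zero_iff: "quot_proj Y v = quot_zero Y \<longleftrightarrow> v \<in> Y"
proof
  assume "quot_proj Y v = quot_zero Y"
  then show "v \<in> Y"
    using quot_proj_self[of v] by (simp add: quot_zero_def quot_proj_def)
next
  assume "v \<in> Y"
  then show "quot_proj Y v = quot_zero Y"
    using quot_proj_add[of v 0] by (simp add: quot_zero_def)
qed

end

definition quot_lift :: "('a \<Rightarrow> real) \<Rightarrow> 'a set \<Rightarrow> real" where
  "quot_lift h X = h (SOME x. x \<in> X)"

lemma quot_lift_proj:
  assumes Y: "subspace Y" and inv: "\<And>x y. y \<in> Y \<Longrightarrow> h (x + y) = h x"
  shows "quot_lift h (quot_proj Y z) = h z"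
  using quot_proj_some[OF Y, of z] inv by (auto simp: quot_lift_def)

section \<open>The constancy space of a convex function\<close>

definition constancy_space :: "('a::real_vector \<Rightarrow> real) \<Rightarrow> 'a set" where
  "constancy_space h = {v. \<forall>t. h (t *\<^sub>R v) = h 0}"

context
  fixes h :: "'a::real_vector \<Rightarrow> real"
  assumes cv: "convex_on UNIV h"
begin

lemma constancy_space_translate:
  assumes v: "v \<in> constancy_space h"
  shows "h (x + v) = h x"
proof -
  have "h (x + t *\<^sub>R v) \<le> (h (2 *\<^sub>R x) + h 0) / 2" for t
    using convex_on_midpoint_le[OF cv, of "2 *\<^sub>R x" "(2 * t) *\<^sub>R v"] v
    by (simp add: constancy_space_def)
  from convex_on_line_bounded_above_imp_const[OF cv this, of 1] show ?thesis by simp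
qed

lemma subspace_constancy_space: "subspace (constancy_space h)"
  unfolding subspace_def
proof (intro conjI ballI allI)
  show "0 \<in> constancy_space h" by (simp add: constancy_space_def)
  show "c *\<^sub>R v \<in> constancy_space h" if "v \<in> constancy_space h" for c v
    using that by (simp add: constancy_space_def)
  show "u + v \<in> constancy_space h" if "u \<in> constancy_space h" "v \<in> constancy_space h" for u v
  proof -
    have "h (t *\<^sub>R u + t *\<^sub>R v) = h 0" for t
      using constancy_space_translate[of "t *\<^sub>R v" "t *\<^sub>R u"] that
      by (simp add: constancy_space_def)
    then show ?thesis by (simp add: constancy_space_def scaleR_add_right)
  qed
qed

lemma constant_on_line_imp_constancy_space:
  assumes const: "\<And>t. h (x + t *\<^sub>R v) = h x"
  shows "v \<in> constancy_space h"
proof -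
  have "h (0 + t *\<^sub>R v) \<le> (h x + h (- x)) / 2" for t
    using convex_on_midpoint_le[OF cv, of "x + (2 * t) *\<^sub>R v" "- x"] const[of "2 * t"]
    by (simp add: algebra_simps)
  from convex_on_line_bounded_above_imp_const[OF cv this] show ?thesis
    by (simp add: constancy_space_def)
qed

end

lemma closed_constancy_space:
  fixes h :: "'a::real_normed_vector \<Rightarrow> real"
  assumes "continuous_on UNIV h"
  shows "closed (constancy_space h)"
proof -
  have "constancy_space h = (\<Inter>t. {v. h (t *\<^sub>R v) = h 0})"
    by (auto simp: constancy_space_def)
  moreover have "closed {v. h (t *\<^sub>R v) = h 0}" for t
    by (intro closed_Collect_eq continuous_on_compose2[OF assms] continuous_intros) auto
  ultimately show ?thesis by auto
qed

lemma decomposesI: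
  fixes f h l :: "'a::real_normed_vector \<Rightarrow> real"
  assumes Y: "subspace Y" and cv: "convex_on UNIV h"
    and inv: "\<And>x y. y \<in> Y \<Longrightarrow> h (x + y) = h x"
    and lines: "\<And>x v. (\<And>t. h (x + t *\<^sub>R v) = h x) \<Longrightarrow> v \<in> Y"
    and min: "\<And>x. h z0 \<le> h x"
    and l: "l \<in> dual_space" and f: "\<And>z. f z = h z + l z"
  shows "decomposes f Y"
proof -
  let ?c = "quot_lift h"
  have c: "?c (quot_proj Y z) = h z" for z
    by (rule quot_lift_proj[OF Y]) (rule inv)
  have line: "quot_add Y (quot_proj Y x) (quot_scale Y t (quot_proj Y v)) = quot_proj Y (x + t *\<^sub>R v)"
    for x v t
    by (simp add: quot_scale_proj[OF Y] quot_add_proj[OF Y])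
  show ?thesis
    unfolding decomposes_def
  proof (intro exI conjI)
    show "l \<in> dual_space" by fact
    show "\<forall>z. f z = ?c (quot_proj Y z) + l z" by (simp add: c f)
    show "\<forall>X\<in>quot_space Y. h z0 \<le> ?c X" by (auto simp: quot_space_def c min)
    show "h z0 \<in> ?c ` quot_space Y"
      unfolding quot_space_def by (rule image_eqI[of _ _ "quot_proj Y z0"]) (simp_all add: c)
    show "quot_convex_on Y ?c"
      unfolding quot_convex_on_def quot_space_def
    proof (intro ballI allI impI)
      fix A B and u :: real
      assume "A \<in> range (quot_proj Y)" "B \<in> range (quot_proj Y)" and u: "0 \<le> u \<and> u \<le> 1"
      then obtain p q where "A = quot_proj Y p" "B = quot_proj Y q" by blast
      then show "?c (quot_add Y (quot_scale Y u A) (quot_scale Y (1 - u) B)) \<le> u * ?c A + (1 - u) * ?c B"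
        using convex_onD[OF cv, of "1 - u" p q] u
        by (simp add: quot_scale_proj[OF Y] quot_add_proj[OF Y] c)
    qed
    show "\<not> quot_const_on_some_line Y ?c"
    proof
      assume "quot_const_on_some_line Y ?c"
      then obtain x v k where v: "quot_proj Y v \<noteq> quot_zero Y"
        and k: "\<And>t. ?c (quot_add Y (quot_proj Y x) (quot_scale Y t (quot_proj Y v))) = k"
        unfolding quot_const_on_some_line_def quot_space_def by blast
      have "h (x + t *\<^sub>R v) = h x" for t
        using k[of t] k[of 0] by (simp add: line c)
      then have "v \<in> Y" by (rule lines)
      with v show False by (simp add: quot_proj_eq_zero_iff[OF Y])
    qed
  qed
qed

lemma affine_bounded_below_imp_slope_zero:
  fixes a b s :: real
  assumes "\<And>t. a \<le> b + t * s"
  shows "s = 0"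
proof (rule ccontr)
  assume "s \<noteq> 0"
  then have "b + (a - b - 1) / s * s < a" by simp
  with assms show False by (meson not_le)
qed

lemma decomposes_subspace_eq:
  fixes f :: "'a::real_normed_vector \<Rightarrow> real"
  assumes Y: "subspace Y" and dec: "decomposes f Y" and \<xi>: "\<xi> \<in> subdiff f z0"
  shows "Y = {v. \<forall>t::real. f (z0 + t *\<^sub>R v) - f z0 - \<xi> (t *\<^sub>R v) = 0}"
proof -
  obtain c l a where l: "l \<in> dual_space" and nc: "\<not> quot_const_on_some_line Y c"
    and low: "\<And>X. X \<in> quot_space Y \<Longrightarrow> a \<le> c X" and f: "\<And>z. f z = c (quot_proj Y z) + l z"
    using dec unfolding decomposes_def by blast
  have ll: "linear l" and l\<xi>: "linear \<xi>"
    using l \<xi> by (auto simp: dual_space_def subdiff_def bounded_linear.linear)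
  define dev where "dev v t = f (z0 + t *\<^sub>R v) - f z0 - \<xi> (t *\<^sub>R v)" for v t
  have dev: "dev v t = c (quot_proj Y (z0 + t *\<^sub>R v)) - c (quot_proj Y z0) - t * (\<xi> v - l v)" for v t
    using f[of "z0 + t *\<^sub>R v"] f[of z0]
    by (simp add: dev_def linear_add[OF ll] linear_scale[OF ll] linear_scale[OF l\<xi>] algebra_simps)
  have dev_nonneg: "0 \<le> dev v t" for v t
  proof -
    have "\<forall>y. f z0 + \<xi> (y - z0) \<le> f y"
      using \<xi> by (simp add: subdiff_def)
    from this[rule_format, of "z0 + t *\<^sub>R v"] show ?thesis by (simp add: dev_def)
  qed
  have "v \<in> Y \<longleftrightarrow> (\<forall>t. dev v t = 0)" for v
  proof
    assume "v \<in> Y"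
    then have "dev v t = - t * (\<xi> v - l v)" for t
      by (simp add: dev quot_proj_add[OF Y] subspace_scale[OF Y])
    moreover have "l v - \<xi> v = 0"
      using dev_nonneg[of v] by (intro affine_bounded_below_imp_slope_zero[of 0 0])
        (simp add: calculation algebra_simps)
    ultimately show "\<forall>t. dev v t = 0" by simp
  next
    assume "\<forall>t. dev v t = 0"
    then have along: "c (quot_proj Y (z0 + t *\<^sub>R v)) = c (quot_proj Y z0) + t * (\<xi> v - l v)" for t
      using dev[of v t] by simp
    have "\<xi> v - l v = 0"
      using low[of "quot_proj Y (z0 + _ *\<^sub>R v)"] along
      by (intro affine_bounded_below_imp_slope_zero[of a "c (quot_proj Y z0)"]) (simp add: quot_space_def)
    then have "c (quot_add Y (quot_proj Y z0) (quot_scale Y t (quot_proj Y v))) = c (quot_proj Y z0)" for t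
      using along[of t] by (simp add: quot_scale_proj[OF Y] quot_add_proj[OF Y])
    then show "v \<in> Y"
      using nc quot_proj_eq_zero_iff[OF Y, of v]
      unfolding quot_const_on_some_line_def quot_space_def by blast
  qed
  then show ?thesis by (auto simp: dev_def)
qed

lemma decomposes_exists:
  fixes f :: "'a::real_normed_vector \<Rightarrow> real"
  assumes cont: "continuous_on UNIV f" and cv: "convex_on UNIV f"
  obtains Y where "closed Y" "subspace Y" "decomposes f Y"
proof -
  obtain \<xi> where "\<xi> \<in> subdiff f 0"
    using subdiff_nonempty[OF cv] cont by (auto simp: continuous_on_eq_continuous_at)
  then have \<xi>: "\<xi> \<in> dual_space" "bounded_linear \<xi>" and sg: "\<And>y. f 0 + \<xi> y \<le> f y"
    by (auto simp: subdiff_def dual_space_def)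
  define h where "h z = f z - \<xi> z" for z
  have h: "convex_on UNIV h"
    unfolding h_def using convex_on_diff_linear[OF cv bounded_linear.linear[OF \<xi>(2)]] .
  have "continuous_on UNIV h"
    unfolding h_def by (intro continuous_intros cont bounded_linear.continuous_on[OF \<xi>(2)])
  then have "closed (constancy_space h)" by (rule closed_constancy_space)
  moreover have "decomposes f (constancy_space h)"
  proof (rule decomposesI[OF subspace_constancy_space[OF h] h _ _ _ \<xi>(1)])
    show "h (x + y) = h x" if "y \<in> constancy_space h" for x y
      using constancy_space_translate[OF h that] .
    show "v \<in> constancy_space h" if "\<And>t. h (x + t *\<^sub>R v) = h x" for x v
      using constant_on_line_imp_constancy_space[OF h that] .
    show "h 0 \<le> h x" for x
      using sg[of x] linear_0[OF bounded_linear.linear[OF \<xi>(2)]] by (simp add: h_def)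
    show "f z = h z + \<xi> z" for z by (simp add: h_def)
  qed
  ultimately show ?thesis using that subspace_constancy_space[OF h] by blast
qed

theorem mainTheorem2:
  fixes f :: "'z::banach \<Rightarrow> real"
  assumes "continuous_on UNIV f" and "convex_on UNIV f"
  shows "(\<exists>!Y. closed Y \<and> subspace Y \<and> decomposes f Y) \<and>
         (\<forall>Y. closed Y \<and> subspace Y \<and> decomposes f Y \<longrightarrow>
            (\<forall>z0 \<xi>0. \<xi>0 \<in> subdiff f z0 \<longrightarrow>
               Y = {v. \<forall>t::real. f (z0 + t *\<^sub>R v) - f z0 - \<xi>0 (t *\<^sub>R v) = 0}))"
proof -
  obtain \<xi> where \<xi>: "\<xi> \<in> subdiff f 0"
    using subdiff_nonempty assms by (fastforce simp: continuous_on_eq_continuous_at)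
  obtain Y where "closed Y" "subspace Y" "decomposes f Y"
    using decomposes_exists[OF assms] .
  then have "\<exists>!Y. closed Y \<and> subspace Y \<and> decomposes f Y"
    using decomposes_subspace_eq[OF _ _ \<xi>] by blast
  then show ?thesis
    using decomposes_subspace_eq by blast
qed

end
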